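(* Let $T$ be an arbitrary triangle, $\Gamma_{h,T}$ an open line segment with endpoints on $\partial T$ dividing $T$ into two nonempty open parts $T_h^\pm$, and $\mu^\pm>0$. Then every pair $(\mathbf{v},q)\in \mathbf{V}M_h^{IFE}(T)$ is uniquely determined by the values $N_{i,T}(\mathbf{v},q)$, $i=1,\dots,7$. Moreover, $$(\mathbf{v},q)=(\mathbf{v}^{J_0},q^{J_0})+(c_2\mathbf{v}^{J_2},c_1q^{J_1}),$$ where $\mathbf{v}^{J_0}=\sum_{i=1}^6N_{i,T}(\mathbf{v},q)\boldsymbol{\phi}_{i,T}$, $q^{J_0}=N_{7,T}(\mathbf{v},q)$, $$c_1=\sigma(\mu^--\mu^+,\mathbf{v}^{J_0},0)\mathbf{n}_h\cdot\mathbf{n}_h,\qquad c_2=\frac{\sigma(\mu^-/\mu^+-1,\mathbf{v}^{J_0},0)\mathbf{n}_h\cdot\mathbf{t}_h}{1+(\mu^-/\mu^+-1)\nabla\pi^{CR}_{h,T}w\cdot\mathbf{n}_h},$$ $q^{J_1}=z-\pi^0_{h,T}z$ and $\mathbf{v}^{J_2}=(w-\pi^{CR}_{h,T}w)\mathbf{t}_h$.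
   Context: $\mathbf{n}_h$ is the unit normal of $\Gamma_{h,T}$ pointing into $T_h^+$, $\mathbf{t}_h$ is $\mathbf{n}_h$ rotated $90^\circ$ clockwise. $\sigma(\mu,\mathbf{v},q)=2\mu\boldsymbol{\epsilon}(\mathbf{v})-q\mathbb{I}$, $\boldsymbol{\epsilon}(\mathbf{v})=\frac12(\nabla\mathbf{v}+(\nabla\mathbf{v})^T)$ (with $\mu$ any real number). For polynomials $g^\pm$ on $T$, $[\![g^\pm]\!]=g^+-g^-$. The local IFE space $\mathbf{V}M_h^{IFE}(T)$ is the set of pairs $(\mathbf{v},q)$ with $\mathbf{v}=\mathbf{v}^\pm$, $q=q^\pm$ on $T_h^\pm$, where $\mathbf{v}^\pm\in P_1(T)^2$, $q^\pm\in P_0(T)$ satisfy $[\![\sigma(\mu^\pm,\mathbf{v}^\pm,q^\pm)\mathbf{n}_h]\!]=\mathbf{0}$, $\mathbf{v}^+=\mathbf{v}^-$ on $\Gamma_{h,T}$, and $[\![\nabla\cdot\mathbf{v}^\pm]\!]=0$. With edges $e_1,e_2,e_3$ and $\mathbf{v}=(v_1,v_2)^T$: $N_{i,T}(\mathbf{v},q)=|e_i|^{-1}\int_{e_i}v_1$, $N_{3+i,T}=|e_i|^{-1}\int_{e_i}v_2$ ($i=1,2,3$), $N_{7,T}=|T|^{-1}\int_Tq$. $\lambda_{i,T}\in P_1(T)$ are the Crouzeix–Raviart basis functions, $|e_j|^{-1}\int_{e_j}\lambda_{i,T}=\delta_{ij}$, and $\boldsymbol{\phi}_{i,T}=(\lambda_{i,T},0)^T$,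 $\boldsymbol{\phi}_{i+3,T}=(0,\lambda_{i,T})^T$, $i=1,2,3$. $\pi^{CR}_{h,T}$ is the linear interpolant matching the three edge integrals, $\pi^0_{h,T}$ the mean over $T$. $z=-1$ on $T_h^+$, $z=0$ on $T_h^-$; $w=\operatorname{dist}(\cdot,\Gamma_{h,T})$ on $T_h^+$, $w=0$ on $T_h^-$. *)

theory Defs
  imports "HOL-Analysis.Analysis"
begin

type_synonym pt = "real \<times> real"

definition P1 :: "(pt \<Rightarrow> real) \<Rightarrow> bool" where
  "P1 f \<longleftrightarrow> (\<exists>c b1 b2. \<forall>x. f x = c + b1 * fst x + b2 * snd x)"

definition P1v :: "(pt \<Rightarrow> pt) \<Rightarrow> bool" where
  "P1v v \<longleftrightarrow> P1 (\<lambda>x. fst (v x)) \<and> P1 (\<lambda>x. snd (v x))"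

text \<open>Partial derivatives / gradient (used only for P1 functions, whose
  derivative is constant; evaluated at the origin).\<close>
definition pd1 :: "(pt \<Rightarrow> real) \<Rightarrow> real" where
  "pd1 f = frechet_derivative f (at 0) (1, 0)"
definition pd2 :: "(pt \<Rightarrow> real) \<Rightarrow> real" where
  "pd2 f = frechet_derivative f (at 0) (0, 1)"
definition grad :: "(pt \<Rightarrow> real) \<Rightarrow> pt" where
  "grad f = (pd1 f, pd2 f)"
definition divg :: "(pt \<Rightarrow> pt) \<Rightarrow> real" where
  "divg v = pd1 (\<lambda>x. fst (v x)) + pd2 (\<lambda>x. snd (v x))"

text \<open>sigma(mu,v,q) n = (2 mu eps(v) - q I) n, for P1 vector fields v and constant q.\<close>
definition sigma_n :: "real \<Rightarrow> (pt \<Rightarrow> pt) \<Rightarrow> real \<Rightarrow> pt \<Rightarrow> pt" where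
  "sigma_n mu v q n =
     (let e11 = pd1 (\<lambda>x. fst (v x));
          e22 = pd2 (\<lambda>x. snd (v x));
          e12 = (pd2 (\<lambda>x. fst (v x)) + pd1 (\<lambda>x. snd (v x))) / 2
      in (2 * mu * (e11 * fst n + e12 * snd n) - q * fst n,
          2 * mu * (e12 * fst n + e22 * snd n) - q * snd n))"

definition IFE :: "pt set \<Rightarrow> pt set \<Rightarrow> pt set \<Rightarrow> pt \<Rightarrow> real \<Rightarrow> real
                   \<Rightarrow> (pt \<Rightarrow> pt) \<Rightarrow> (pt \<Rightarrow> real) \<Rightarrow> bool" where
  "IFE Tp Tm G n mup mum v q \<longleftrightarrow>
     (\<exists>vp vm (qp::real) (qm::real). P1v vp \<and> P1v vm \<and>
        (\<forall>x\<in>Tp. v x = vp x \<and> q x = qp) \<and>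
        (\<forall>x\<in>Tm. v x = vm x \<and> q x = qm) \<and>
        sigma_n mup vp qp n - sigma_n mum vm qm n = 0 \<and>
        (\<forall>x\<in>G. vp x = vm x) \<and>
        divg vp - divg vm = 0)"

text \<open>Mean value over a segment [a,b]: |e|^{-1} \<integral>_e f ds, via the affine
  parametrisation (arc length = |e| t).\<close>
definition edge_avg :: "pt \<Rightarrow> pt \<Rightarrow> (pt \<Rightarrow> real) \<Rightarrow> real" where
  "edge_avg a b f = integral {0..1} (\<lambda>t. f (a + t *\<^sub>R (b - a)))"

text \<open>Edges of the triangle with vertices a1 a2 a3: e_i is the edge opposite a_i.\<close>
definition edge :: "pt \<Rightarrow> pt \<Rightarrow> pt \<Rightarrow> nat \<Rightarrow> pt \<times> pt" where
  "edge a1 a2 a3 i = (if i = 1 then (a2, a3) else if i = 2 then (a3, a1) else (a1, a2))"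

definition eavg :: "pt \<Rightarrow> pt \<Rightarrow> pt \<Rightarrow> nat \<Rightarrow> (pt \<Rightarrow> real) \<Rightarrow> real" where
  "eavg a1 a2 a3 i f = (case edge a1 a2 a3 i of (a, b) \<Rightarrow> edge_avg a b f)"

definition mean :: "pt set \<Rightarrow> (pt \<Rightarrow> real) \<Rightarrow> real" where
  "mean T f = integral T f / measure lebesgue T"

definition Ndof :: "pt \<Rightarrow> pt \<Rightarrow> pt \<Rightarrow> nat \<Rightarrow> (pt \<Rightarrow> pt) \<Rightarrow> (pt \<Rightarrow> real) \<Rightarrow> real" where
  "Ndof a1 a2 a3 i v q =
     (if i \<in> {1, 2, 3} then eavg a1 a2 a3 i (\<lambda>x. fst (v x))
      else if i \<in> {4, 5, 6} then eavg a1 a2 a3 (i - 3) (\<lambda>x. snd (v x))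
      else mean (convex hull {a1, a2, a3}) q)"

definition cr_basis :: "pt \<Rightarrow> pt \<Rightarrow> pt \<Rightarrow> nat \<Rightarrow> pt \<Rightarrow> real" where
  "cr_basis a1 a2 a3 i =
     (THE l. P1 l \<and> (\<forall>j\<in>{1, 2, 3}. eavg a1 a2 a3 j l = (if i = j then 1 else 0)))"

definition pi_cr :: "pt \<Rightarrow> pt \<Rightarrow> pt \<Rightarrow> (pt \<Rightarrow> real) \<Rightarrow> pt \<Rightarrow> real" where
  "pi_cr a1 a2 a3 f = (THE g. P1 g \<and> (\<forall>j\<in>{1, 2, 3}. eavg a1 a2 a3 j g = eavg a1 a2 a3 j f))"

end

theory Submission
  imports Defs
begin

(*
  Continuity across the cut line and equal
  divergence force v^+ - v^- = c l t with l(x) = n.(x - p), so on T, off the line,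
  v = v^- + c max(0, l) t.  The Crouzeix--Raviart interpolant sees only edge means and reproduces
  affine functions, hence v^J0 = v^- + c pi^CR(w) t and v = v^J0 + c (w - pi^CR w) t.  Inserting this
  into the normal stress condition gives c1 = q^- - q^+ and
  c (1 + (mu^-/mu^+ - 1) grad pi^CR(w).n) = sigma(mu^-/mu^+ - 1, v^J0, 0) n.t, where
  grad pi^CR(w).n, computed from the edge means of the ramp max(0, l), equals |T^+|/|T| in [0, 1];
  so the denominator is positive.  The pressure is fixed by its mean over T, and uniqueness follows
  because all these quantities depend on (v, q) only through the seven degrees of freedom.
*)

section \<open>Affine functions on the plane\<close>

definition aff_fun :: "real \<Rightarrow> real \<Rightarrow> real \<Rightarrow> pt \<Rightarrow> real" where
  "aff_fun c b1 b2 = (\<lambda>x. c + b1 * fst x + b2 * snd x)"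

lemma pd_aff_fun: "pd1 (aff_fun c b1 b2) = b1" "pd2 (aff_fun c b1 b2) = b2"
proof -
  have D: "(aff_fun c b1 b2 has_derivative (\<lambda>h. b1 * fst h + b2 * snd h)) (at 0)"
    unfolding aff_fun_def by (auto intro!: derivative_eq_intros)
  show "pd1 (aff_fun c b1 b2) = b1" "pd2 (aff_fun c b1 b2) = b2"
    unfolding pd1_def pd2_def frechet_derivative_at[OF D, symmetric] by simp_all
qed

lemma P1_aff_fun: "P1 (aff_fun c b1 b2)"
  unfolding P1_def aff_fun_def by blast

lemma P1_eq_aff_fun:
  assumes "P1 f" shows "f = aff_fun (f 0) (pd1 f) (pd2 f)"
proof -
  from assms obtain c b1 b2 where "f = aff_fun c b1 b2"
    unfolding P1_def aff_fun_def by blast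
  then show ?thesis by (simp add: pd_aff_fun) (simp add: aff_fun_def)
qed

lemma P1_eval: "P1 f \<Longrightarrow> f x = f 0 + grad f \<bullet> x"
  by (subst P1_eq_aff_fun) (auto simp: aff_fun_def grad_def inner_prod_def)

lemma P1_diff: "P1 f \<Longrightarrow> f y - f x = grad f \<bullet> (y - x)"
  by (metis P1_eval add_diff_cancel_left inner_diff_right)

lemma P1_add_scaleR: "P1 f \<Longrightarrow> f (x + s *\<^sub>R d) = f x + s * (grad f \<bullet> d)"
  using P1_diff[of f "x + s *\<^sub>R d" x] by simp

lemma P1_continuous_on: "P1 f \<Longrightarrow> continuous_on S f"
  by (subst P1_eq_aff_fun) (auto simp: aff_fun_def intro!: continuous_intros)

lemma P1_linear_combination:
  assumes "P1 g" "P1 h"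
  shows "P1 (\<lambda>x. g x + k * h x)" "grad (\<lambda>x. g x + k * h x) = grad g + k *\<^sub>R grad h"
proof -
  have "(\<lambda>x. g x + k * h x) = aff_fun (g 0 + k * h 0) (pd1 g + k * pd1 h) (pd2 g + k * pd2 h)"
    by (subst P1_eq_aff_fun[OF assms(1)], subst P1_eq_aff_fun[OF assms(2)])
       (auto simp: aff_fun_def algebra_simps)
  then show "P1 (\<lambda>x. g x + k * h x)" "grad (\<lambda>x. g x + k * h x) = grad g + k *\<^sub>R grad h"
    by (simp_all add: P1_aff_fun pd_aff_fun grad_def)
qed

lemma pd_linear_combination:
  assumes "P1 g" "P1 h"
  shows "pd1 (\<lambda>x. g x + k * h x) = pd1 g + k * pd1 h" "pd2 (\<lambda>x. g x + k * h x) = pd2 g + k * pd2 h"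
  using P1_linear_combination(2)[OF assms, of k] by (simp_all add: grad_def)

lemma P1_const: "P1 (\<lambda>x. c)"
  using P1_aff_fun[of c 0 0] by (simp add: aff_fun_def)

lemma P1_inner_diff: "P1 (\<lambda>x. n \<bullet> (x - p))" "grad (\<lambda>x. n \<bullet> (x - p)) = n"
proof -
  have "(\<lambda>x. n \<bullet> (x - p)) = aff_fun (- (n \<bullet> p)) (fst n) (snd n)"
    by (auto simp: aff_fun_def inner_prod_def algebra_simps)
  then show "P1 (\<lambda>x. n \<bullet> (x - p))" "grad (\<lambda>x. n \<bullet> (x - p)) = n"
    by (simp_all add: P1_aff_fun pd_aff_fun grad_def)
qed

lemma P1_sum:
  assumes "finite I" "\<And>i. i \<in> I \<Longrightarrow> P1 (f i)"
  shows "P1 (\<lambda>x. \<Sum>i\<in>I. c i * f i x)"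
  using assms
proof (induction I rule: finite_induct)
  case empty
  then show ?case using P1_const[of 0] by simp
next
  case (insert i I)
  then show ?case using P1_linear_combination(1)[of "\<lambda>x. \<Sum>i\<in>I. c i * f i x" "f i" "c i"]
    by (simp add: add.commute)
qed

lemma unit_frame_decomposition:
  fixes n u :: pt
  assumes "norm n = 1"
  shows "u = (n \<bullet> u) *\<^sub>R n + ((snd n, - fst n) \<bullet> u) *\<^sub>R (snd n, - fst n)"
proof -
  obtain n1 n2 u1 u2 where coords: "n = (n1, n2)" "u = (u1, u2)" by (cases n, cases u)
  moreover have "n1\<^sup>2 + n2\<^sup>2 = 1" using assms coords by (simp add: norm_Pair)
  then have "u1 = (n1 * u1 + n2 * u2) * n1 + (n2 * u1 - n1 * u2) * n2"
    "u2 = (n1 * u1 + n2 * u2) * n2 - (n2 * u1 - n1 * u2) * n1" by algebra+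
  ultimately show ?thesis by simp
qed

lemma inner_unit_frame:
  fixes n a u :: pt
  assumes "norm n = 1"
  shows "a \<bullet> u = (a \<bullet> n) * (n \<bullet> u) + (a \<bullet> (snd n, - fst n)) * ((snd n, - fst n) \<bullet> u)"
  by (subst unit_frame_decomposition[OF assms, of u]) (simp only: inner_add_right inner_scaleR_right ac_simps)

lemma P1_unit_frame_expansion:
  assumes "P1 h" "norm n = 1"
  shows "h y = h p + (grad h \<bullet> n) * (n \<bullet> (y - p))
                   + (grad h \<bullet> (snd n, - fst n)) * ((snd n, - fst n) \<bullet> (y - p))"
  using P1_diff[OF assms(1), of y p] inner_unit_frame[OF assms(2), of "grad h" "y - p"] by simp

lemma tangent_inner_neq_0:
  fixes n d :: pt
  assumes "norm n = 1" "n \<bullet> d = 0" "d \<noteq> 0"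
  shows "(snd n, - fst n) \<bullet> d \<noteq> 0"
  using unit_frame_decomposition[OF assms(1), of d] assms(2,3) by (auto simp: zero_prod_def)

lemma P1_vanishing_on_segment:
  assumes f: "P1 f" and zero: "\<forall>x\<in>open_segment p p'. f x = 0" and "p \<noteq> p'"
    and n: "norm n = 1" "n \<bullet> (p' - p) = 0"
  shows "f x = (grad f \<bullet> n) * (n \<bullet> (x - p))"
proof -
  define t where "t = (snd n, - fst n)"
  have "f p + s * (grad f \<bullet> (p' - p)) = 0" if "0 < s" "s < 1" for s
  proof -
    have "p + s *\<^sub>R (p' - p) \<in> open_segment p p'"
      using \<open>p \<noteq> p'\<close> that unfolding in_segment by (intro conjI exI[of _ s]) (auto simp: algebra_simps)
    then have "f (p + s *\<^sub>R (p' - p)) = 0" using zero by blast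
    then show ?thesis using P1_add_scaleR[OF f] by simp
  qed
  from this[of "1/2"] this[of "1/4"]
  have "f p + (1/2) * (grad f \<bullet> (p' - p)) = 0" "f p + (1/4) * (grad f \<bullet> (p' - p)) = 0"
    by simp_all
  then have fp: "f p = 0" and "grad f \<bullet> (p' - p) = 0" by linarith+
  moreover have "grad f \<bullet> (p' - p) = (grad f \<bullet> t) * (t \<bullet> (p' - p))"
    using inner_unit_frame[OF n(1), of "grad f" "p' - p"] n(2) by (simp add: t_def)
  moreover have "t \<bullet> (p' - p) \<noteq> 0"
    unfolding t_def using tangent_inner_neq_0[OF n] \<open>p \<noteq> p'\<close> by simp
  ultimately have "grad f \<bullet> t = 0" by simp
  then show ?thesis using P1_unit_frame_expansion[OF f n(1), of x p] fp by (simp add: t_def)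
qed

definition orient :: "pt \<Rightarrow> pt \<Rightarrow> pt \<Rightarrow> real" where
  "orient a b c = (fst b - fst a) * (snd c - snd a) - (snd b - snd a) * (fst c - fst a)"

lemma orient_neq_0_if_not_collinear:
  assumes "\<not> collinear {a, b, c}"
  shows "orient a b c \<noteq> 0"
proof
  assume orient0: "orient a b c = 0"
  have "a \<noteq> c" using assms by (auto simp: collinear_3_expand)
  obtain d1 d2 e1 e2 where d: "a - c = (d1, d2)" and e: "b - c = (e1, e2)"
    by (cases "a - c", cases "b - c")
  have D: "d1 * d1 + d2 * d2 \<noteq> 0"
  proof
    assume "d1 * d1 + d2 * d2 = 0"
    then have "d1 = 0" "d2 = 0" by (simp_all add: add_nonneg_eq_0_iff)
    with d \<open>a \<noteq> c\<close> show False by (simp flip: zero_prod_def)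
  qed
  have "d1 * e2 = d2 * e1"
    using orient0 d e unfolding orient_def by (cases a, cases b, cases c) (auto simp: algebra_simps)
  then have h1: "(e1 * d1 + e2 * d2) * d1 = e1 * (d1 * d1 + d2 * d2)"
    and h2: "(e1 * d1 + e2 * d2) * d2 = e2 * (d1 * d1 + d2 * d2)" by algebra+
  define u where "u = (e1 * d1 + e2 * d2) / (d1 * d1 + d2 * d2)"
  have "u * d1 = e1" unfolding u_def using D h1 by (simp add: field_simps)
  moreover have "u * d2 = e2" unfolding u_def using D h2 by (simp add: field_simps)
  ultimately have "b - c = u *\<^sub>R (a - c)" using d e by simp
  then have "b = u *\<^sub>R a + (1 - u) *\<^sub>R c" by (simp add: algebra_simps)
  with assms show False by (auto simp: collinear_3_expand)
qed

lemma orient_unit_frame: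
  fixes n q a b c :: pt
  assumes "norm n = 1"
  defines "u \<equiv> \<lambda>x. n \<bullet> (x - q)" and "v \<equiv> \<lambda>x. (snd n, - fst n) \<bullet> (x - q)"
  shows "(u a - u b) * (v a - v c) - (u a - u c) * (v a - v b) = - orient a b c"
proof -
  obtain n1 n2 x1 y1 x2 y2 x3 y3 where
    coords: "n = (n1, n2)" "a = (x1, y1)" "b = (x2, y2)" "c = (x3, y3)"
    by (cases n, cases a, cases b, cases c)
  have "n1\<^sup>2 + n2\<^sup>2 = 1" using assms(1) coords by (simp add: norm_Pair)
  then have "(n1 * (x1 - x2) + n2 * (y1 - y2)) * (n2 * (x1 - x3) - n1 * (y1 - y3))
      - (n1 * (x1 - x3) + n2 * (y1 - y3)) * (n2 * (x1 - x2) - n1 * (y1 - y2))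
      = - ((x2 - x1) * (y3 - y1) - (y2 - y1) * (x3 - x1))" by algebra
  then show ?thesis
    unfolding u_def v_def orient_def coords by (simp add: inner_diff_right algebra_simps)
qed

lemma orient_inner_eq_0:
  assumes "orient q1 q2 q3 \<noteq> 0" "g \<bullet> (q2 - q1) = 0" "g \<bullet> (q3 - q1) = 0"
  shows "g = 0"
proof -
  obtain g1 g2 x1 y1 x2 y2 x3 y3 where
    coords: "g = (g1, g2)" "q1 = (x1, y1)" "q2 = (x2, y2)" "q3 = (x3, y3)"
    by (cases g, cases q1, cases q2, cases q3)
  have "g1 * (x2 - x1) + g2 * (y2 - y1) = 0" "g1 * (x3 - x1) + g2 * (y3 - y1) = 0"
    using assms(2,3) coords by simp_all
  then have "g1 * orient q1 q2 q3 = 0" "g2 * orient q1 q2 q3 = 0"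
    unfolding orient_def coords by simp_all algebra+
  then show ?thesis using assms(1) coords by (simp add: zero_prod_def)
qed

lemma P1_eq_if_agree_at_3:
  assumes "orient q1 q2 q3 \<noteq> 0" "P1 f" "P1 g"
    and "f q1 = g q1" "f q2 = g q2" "f q3 = g q3"
  shows "f = g"
proof -
  define h where "h x = f x + (- 1) * g x" for x
  have h: "P1 h" unfolding h_def using P1_linear_combination(1)[OF assms(2,3)] .
  have "h q1 = 0" "h q2 = 0" "h q3 = 0" using assms(4-6) by (simp_all add: h_def)
  then have "grad h \<bullet> (q2 - q1) = 0" "grad h \<bullet> (q3 - q1) = 0"
    using P1_diff[OF h, of q2 q1] P1_diff[OF h, of q3 q1] by simp_all
  then have "grad h = 0" by (rule orient_inner_eq_0[OF assms(1)])
  then have "h x = h q1" for x using P1_diff[OF h, of x q1] by simp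
  with \<open>h q1 = 0\<close> show ?thesis by (auto simp: h_def)
qed

lemma P1_interpolation_at_3:
  assumes "orient q1 q2 q3 \<noteq> 0"
  shows "\<exists>f. P1 f \<and> f q1 = m1 \<and> f q2 = m2 \<and> f q3 = m3"
proof -
  obtain x1 y1 x2 y2 x3 y3 where q: "q1 = (x1, y1)" "q2 = (x2, y2)" "q3 = (x3, y3)"
    by (cases q1, cases q2, cases q3)
  define D where "D = orient q1 q2 q3"
  have D: "D \<noteq> 0" using assms by (simp add: D_def)
  define b1 where "b1 = ((m2 - m1) * (y3 - y1) - (m3 - m1) * (y2 - y1)) / D"
  define b2 where "b2 = ((m3 - m1) * (x2 - x1) - (m2 - m1) * (x3 - x1)) / D"
  have "b1 * D = (m2 - m1) * (y3 - y1) - (m3 - m1) * (y2 - y1)"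
    "b2 * D = (m3 - m1) * (x2 - x1) - (m2 - m1) * (x3 - x1)"
    using D unfolding b1_def b2_def by simp_all
  then have "(b1 * (x2 - x1) + b2 * (y2 - y1)) * D = (m2 - m1) * D"
    "(b1 * (x3 - x1) + b2 * (y3 - y1)) * D = (m3 - m1) * D"
    unfolding D_def orient_def q by simp_all algebra+
  then have "b1 * (x2 - x1) + b2 * (y2 - y1) = m2 - m1" "b1 * (x3 - x1) + b2 * (y3 - y1) = m3 - m1"
    using D by simp_all
  then have "aff_fun (m1 - b1 * x1 - b2 * y1) b1 b2 q1 = m1"
    "aff_fun (m1 - b1 * x1 - b2 * y1) b1 b2 q2 = m2"
    "aff_fun (m1 - b1 * x1 - b2 * y1) b1 b2 q3 = m3"
    unfolding q aff_fun_def by (simp_all add: algebra_simps)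
  then show ?thesis using P1_aff_fun by blast
qed

section \<open>Edge averages and Crouzeix--Raviart interpolation\<close>

lemma integral_01_affine: "integral {0..1::real} (\<lambda>t. \<alpha> + t * \<beta>) = \<alpha> + \<beta> / 2"
proof -
  have "((\<lambda>t. \<alpha> + t * \<beta>) has_integral
      ((\<lambda>t. \<alpha> * t + \<beta> * t\<^sup>2 / 2) 1 - (\<lambda>t. \<alpha> * t + \<beta> * t\<^sup>2 / 2) 0)) {0..1::real}"
    by (rule fundamental_theorem_of_calculus)
       (auto intro!: derivative_eq_intros simp: has_real_derivative_iff_has_vector_derivative[symmetric])
  then show ?thesis by (simp add: integral_unique)
qed

lemma edge_avg_P1:
  assumes "P1 f"
  shows "edge_avg a b f = f (midpoint a b)"
proof -
  have "edge_avg a b f = integral {0..1} (\<lambda>t. f a + t * (grad f \<bullet> (b - a)))"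
    unfolding edge_avg_def using P1_add_scaleR[OF assms] by simp
  also have "\<dots> = f (a + (1/2) *\<^sub>R (b - a))"
    unfolding integral_01_affine P1_add_scaleR[OF assms] by simp
  also have "a + (1/2) *\<^sub>R (b - a) = midpoint a b"
    by (auto simp: midpoint_def prod_eq_iff field_simps)
  finally show ?thesis .
qed

lemma edge_avg_add_scaled:
  assumes "continuous_on UNIV f" "continuous_on UNIV g"
  shows "edge_avg a b (\<lambda>x. f x + k * g x) = edge_avg a b f + k * edge_avg a b g"
proof -
  have "(\<lambda>t. h (a + t *\<^sub>R (b - a))) integrable_on {0..1}" if "continuous_on UNIV h" for h :: "pt \<Rightarrow> real"
    by (intro integrable_continuous_interval continuous_on_compose2[OF that] continuous_intros) auto
  from this[OF assms(1)] integrable_on_cmult_left[OF this[OF assms(2)], of k] show ?thesis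
    unfolding edge_avg_def by (simp add: integral_add)
qed

lemma inner_midpoint_diff: "c \<bullet> (midpoint a b - p) = (c \<bullet> (a - p) + c \<bullet> (b - p)) / 2"
  by (simp add: midpoint_def inner_diff_right inner_add_right field_simps)

definition edge_midpoint :: "pt \<Rightarrow> pt \<Rightarrow> pt \<Rightarrow> nat \<Rightarrow> pt" where
  "edge_midpoint a1 a2 a3 j = (case edge a1 a2 a3 j of (a, b) \<Rightarrow> midpoint a b)"

lemma eavg_P1: "P1 f \<Longrightarrow> eavg a1 a2 a3 j f = f (edge_midpoint a1 a2 a3 j)"
  by (simp add: eavg_def edge_midpoint_def edge_avg_P1 split: prod.split)

lemma eavg_add_scaled:
  "continuous_on UNIV f \<Longrightarrow> continuous_on UNIV g \<Longrightarrow>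
    eavg a1 a2 a3 j (\<lambda>x. f x + k * g x) = eavg a1 a2 a3 j f + k * eavg a1 a2 a3 j g"
  by (simp add: eavg_def edge_avg_add_scaled split: prod.split)

lemma orient_edge_midpoints:
  "orient (edge_midpoint a1 a2 a3 1) (edge_midpoint a1 a2 a3 2) (edge_midpoint a1 a2 a3 3)
     = orient a1 a2 a3 / 4"
  by (simp add: edge_midpoint_def edge_def orient_def midpoint_def algebra_simps)

lemma cr_unisolvent:
  assumes "\<not> collinear {a1, a2, a3}"
  shows "\<exists>!f. P1 f \<and> (\<forall>j\<in>{1, 2, 3}. eavg a1 a2 a3 j f = m j)"
proof -
  let ?q = "edge_midpoint a1 a2 a3"
  have q: "orient (?q 1) (?q 2) (?q 3) \<noteq> 0"
    using orient_neq_0_if_not_collinear[OF assms] orient_edge_midpoints[of a1 a2 a3]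
    by (simp del: One_nat_def)
  obtain f where "P1 f" "f (?q 1) = m 1" "f (?q 2) = m 2" "f (?q 3) = m 3"
    using P1_interpolation_at_3[OF q] by blast
  then have f: "P1 f \<and> (\<forall>j\<in>{1, 2, 3}. eavg a1 a2 a3 j f = m j)"
    by (auto simp: eavg_P1)
  have "g = f" if g: "P1 g" "\<forall>j\<in>{1, 2, 3}. eavg a1 a2 a3 j g = m j" for g
  proof (rule P1_eq_if_agree_at_3[OF q g(1) \<open>P1 f\<close>])
    have "g (?q j) = f (?q j)" if "j \<in> {1, 2, 3}" for j
      using g f that eavg_P1[OF g(1)] eavg_P1[OF \<open>P1 f\<close>] by metis
    then show "g (?q 1) = f (?q 1)" "g (?q 2) = f (?q 2)" "g (?q 3) = f (?q 3)" by simp_all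
  qed
  with f show ?thesis by blast
qed

lemma pi_cr_interpolates:
  assumes "\<not> collinear {a1, a2, a3}"
  shows "P1 (pi_cr a1 a2 a3 f)" "\<forall>j\<in>{1, 2, 3}. eavg a1 a2 a3 j (pi_cr a1 a2 a3 f) = eavg a1 a2 a3 j f"
  using theI'[OF cr_unisolvent[OF assms, of "\<lambda>j. eavg a1 a2 a3 j f"]] unfolding pi_cr_def by blast+

lemma pi_cr_unique:
  assumes "\<not> collinear {a1, a2, a3}" "P1 g" "\<forall>j\<in>{1, 2, 3}. eavg a1 a2 a3 j g = eavg a1 a2 a3 j f"
  shows "pi_cr a1 a2 a3 f = g"
  unfolding pi_cr_def by (rule the1_equality[OF cr_unisolvent[OF assms(1)]]) (use assms(2,3) in blast)

lemma pi_cr_cong: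
  "(\<forall>j\<in>{1, 2, 3}. eavg a1 a2 a3 j f = eavg a1 a2 a3 j g) \<Longrightarrow> pi_cr a1 a2 a3 f = pi_cr a1 a2 a3 g"
  unfolding pi_cr_def by simp

lemma cr_basis_interpolates:
  assumes "\<not> collinear {a1, a2, a3}"
  shows "P1 (cr_basis a1 a2 a3 i)"
    "\<forall>j\<in>{1, 2, 3}. eavg a1 a2 a3 j (cr_basis a1 a2 a3 i) = (if i = j then 1 else 0)"
  using theI'[OF cr_unisolvent[OF assms, of "\<lambda>j. if i = j then 1 else 0"]]
  unfolding cr_basis_def by blast+

lemma sum_cr_basis_eq_pi_cr:
  assumes "\<not> collinear {a1, a2, a3}"
  shows "(\<lambda>x. \<Sum>i\<in>{1, 2, 3}. eavg a1 a2 a3 i f * cr_basis a1 a2 a3 i x) = pi_cr a1 a2 a3 f"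
    (is "?F = _")
proof (rule pi_cr_unique[OF assms, symmetric])
  have basis: "P1 (cr_basis a1 a2 a3 i)" for i using cr_basis_interpolates[OF assms] by blast
  show P: "P1 ?F"
    by (rule P1_sum) (simp_all add: basis)
  have "cr_basis a1 a2 a3 i (edge_midpoint a1 a2 a3 j) = (if i = j then 1 else 0)"
    if "j \<in> {1, 2, 3}" for i j
    using cr_basis_interpolates(2)[OF assms, of i] that eavg_P1[OF basis] by metis
  then have "?F (edge_midpoint a1 a2 a3 j) = eavg a1 a2 a3 j f" if "j \<in> {1, 2, 3}" for j
    using that by auto
  then show "\<forall>j\<in>{1, 2, 3}. eavg a1 a2 a3 j ?F = eavg a1 a2 a3 j f"
    using eavg_P1[OF P] by presburger
qed

lemma Ndof_cr_interpolant:
  assumes "\<not> collinear {a1, a2, a3}"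
  shows "(\<Sum>i\<in>{1, 2, 3}. Ndof a1 a2 a3 i v q * cr_basis a1 a2 a3 i x,
          \<Sum>i\<in>{1, 2, 3}. Ndof a1 a2 a3 (i + 3) v q * cr_basis a1 a2 a3 i x)
       = (pi_cr a1 a2 a3 (\<lambda>x. fst (v x)) x, pi_cr a1 a2 a3 (\<lambda>x. snd (v x)) x)"
  by (simp add: Ndof_def sum_cr_basis_eq_pi_cr[OF assms, symmetric])

section \<open>Means of a ramp along a segment\<close>

definition ramp_mean :: "real \<Rightarrow> real \<Rightarrow> real" where
  "ramp_mean \<alpha> \<beta> = (if 0 \<le> \<alpha> \<and> 0 \<le> \<beta> then (\<alpha> + \<beta>)/2 else if \<alpha> \<le> 0 \<and> \<beta> \<le> 0 then 0
     else if 0 < \<alpha> then \<alpha>^2/(2*(\<alpha> - \<beta>)) else \<beta>^2/(2*(\<beta> - \<alpha>)))"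

lemma integral_ramp_nonneg:
  fixes \<alpha> \<beta> :: real
  assumes "0 \<le> \<alpha>" "0 \<le> \<beta>"
  shows "integral {0..1} (\<lambda>t. max 0 (\<alpha> + t*(\<beta>-\<alpha>))) = (\<alpha> + \<beta>)/2"
proof -
  have "integral {0..1} (\<lambda>t. max 0 (\<alpha> + t*(\<beta>-\<alpha>))) = integral {0..1} (\<lambda>t. \<alpha> + t*(\<beta>-\<alpha>))"
  proof (rule integral_cong)
    fix t :: real assume t: "t \<in> {0..1}"
    have "\<alpha> + t*(\<beta>-\<alpha>) = (1-t)*\<alpha> + t*\<beta>" by (simp add: algebra_simps)
    also have "\<dots> \<ge> 0" using t assms by auto
    finally show "max 0 (\<alpha> + t*(\<beta>-\<alpha>)) = \<alpha> + t*(\<beta>-\<alpha>)" by simp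
  qed
  also have "\<dots> = (\<alpha> + \<beta>)/2" by (simp only: integral_01_affine) (simp add: field_simps)
  finally show ?thesis .
qed

lemma integral_ramp_crossing:
  fixes \<alpha> \<beta> :: real
  assumes "0 < \<alpha>" "\<beta> < 0"
  shows "integral {0..1} (\<lambda>t. max 0 (\<alpha> + t*(\<beta>-\<alpha>))) = \<alpha>^2/(2*(\<alpha> - \<beta>))"
proof -
  define t0 where "t0 = \<alpha>/(\<alpha>-\<beta>)"
  define F where "F t = \<alpha>*t + (\<beta>-\<alpha>)/2*t^2" for t
  have ab: "\<alpha> - \<beta> > 0" using assms by simp
  have t0: "0 \<le> t0" "t0 \<le> 1" unfolding t0_def using assms ab by (auto simp: field_simps)
  have sign: "\<alpha> + t*(\<beta>-\<alpha>) = (t0 - t)*(\<alpha>-\<beta>)" for t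
    unfolding t0_def using ab by (simp add: field_simps)
  have "((\<lambda>t. max 0 (\<alpha> + t*(\<beta>-\<alpha>))) has_integral (F t0 - F 0)) {0..t0}"
  proof (rule fundamental_theorem_of_calculus[OF t0(1)])
    fix x assume x: "x \<in> {0..t0}"
    have "(F has_real_derivative (\<alpha> + x*(\<beta>-\<alpha>))) (at x within {0..t0})"
      unfolding F_def by (auto intro!: derivative_eq_intros simp: field_simps)
    moreover have "max 0 (\<alpha> + x*(\<beta>-\<alpha>)) = \<alpha> + x*(\<beta>-\<alpha>)"
      using x ab by (simp add: sign)
    ultimately show "(F has_vector_derivative max 0 (\<alpha> + x*(\<beta>-\<alpha>))) (at x within {0..t0})"
      by (simp add: has_real_derivative_iff_has_vector_derivative)
  qed
  moreover have "((\<lambda>t. max 0 (\<alpha> + t*(\<beta>-\<alpha>))) has_integral 0) {t0..1}"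
    using has_integral_0 by (rule has_integral_eq[rotated]) (use ab in \<open>simp add: sign mult_nonpos_nonneg\<close>)
  ultimately have "((\<lambda>t. max 0 (\<alpha> + t*(\<beta>-\<alpha>))) has_integral (F t0 - F 0 + 0)) {0..1}"
    by (rule has_integral_combine[OF t0])
  moreover have "F t0 - F 0 = \<alpha>^2/(2*(\<alpha> - \<beta>))"
  proof -
    have "(\<beta>-\<alpha>)*t0 = -\<alpha>" unfolding t0_def using ab by (simp add: field_simps)
    moreover have "F t0 = \<alpha>*t0 + ((\<beta>-\<alpha>)*t0)*t0/2"
      unfolding F_def power2_eq_square by (simp add: field_simps)
    ultimately have "F t0 = \<alpha>*t0/2" by simp
    then show ?thesis unfolding t0_def using ab by (simp add: F_def power2_eq_square)
  qed
  ultimately show ?thesis by (simp add: integral_unique)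
qed

lemma integral_ramp_reflect:
  fixes \<alpha> \<beta> :: real
  shows "integral {0..1} (\<lambda>t. max 0 (\<alpha> + t*(\<beta>-\<alpha>))) =
    (\<alpha> + \<beta>)/2 + integral {0..1} (\<lambda>t. max 0 (-\<alpha> + t*(-\<beta>- -\<alpha>)))"
proof -
  have "integral {0..1} (\<lambda>t. max 0 (\<alpha> + t*(\<beta>-\<alpha>))) =
     integral {0..1} (\<lambda>t. (\<alpha> + t*(\<beta>-\<alpha>)) + max 0 (-\<alpha> + t*(-\<beta>- -\<alpha>)))"
  proof (rule integral_cong)
    fix t :: real
    have h: "-\<alpha> + t*(-\<beta>- -\<alpha>) = -(\<alpha> + t*(\<beta>-\<alpha>))" by (simp add: algebra_simps)
    show "max 0 (\<alpha> + t*(\<beta>-\<alpha>)) = (\<alpha> + t*(\<beta>-\<alpha>)) + max 0 (-\<alpha> + t*(-\<beta>- -\<alpha>))"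
      unfolding h by (simp add: max_def)
  qed
  also have "\<dots> = integral {0..1} (\<lambda>t. \<alpha> + t*(\<beta>-\<alpha>)) + integral {0..1} (\<lambda>t. max 0 (-\<alpha> + t*(-\<beta>- -\<alpha>)))"
    by (rule integral_add; rule integrable_continuous_interval; intro continuous_intros)
  also have "integral {0..1} (\<lambda>t. \<alpha> + t*(\<beta>-\<alpha>)) = (\<alpha> + \<beta>)/2"
    by (simp only: integral_01_affine) (simp add: field_simps)
  finally show ?thesis .
qed

lemma integral_ramp:
  fixes \<alpha> \<beta> :: real
  shows "integral {0..1} (\<lambda>t. max 0 (\<alpha> + t*(\<beta>-\<alpha>))) = ramp_mean \<alpha> \<beta>"
proof -
  consider "0 \<le> \<alpha> \<and> 0 \<le> \<beta>" | "\<alpha> \<le> 0 \<and> \<beta> \<le> 0" | "0 < \<alpha> \<and> \<beta> < 0" | "\<alpha> < 0 \<and> 0 < \<beta>"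
    by linarith
  then show ?thesis
  proof cases
    case 1 then show ?thesis using integral_ramp_nonneg[of \<alpha> \<beta>] by (simp add: ramp_mean_def)
  next
    case 2
    have h0: "ramp_mean \<alpha> \<beta> = 0" using 2 by (auto simp: ramp_mean_def)
    have h2: "integral {0..1} (\<lambda>t. max 0 (-\<alpha> + t*(-\<beta>- -\<alpha>))) = (-\<alpha> + -\<beta>)/2"
      by (rule integral_ramp_nonneg) (use 2 in auto)
    show ?thesis by (subst integral_ramp_reflect, subst h2, subst h0) (simp add: field_simps)
  next
    case 3 then show ?thesis using integral_ramp_crossing[of \<alpha> \<beta>] by (simp add: ramp_mean_def)
  next
    case 4
    have "(\<alpha> + \<beta>) / 2 + (- \<alpha>)\<^sup>2 / (2 * (- \<alpha> - - \<beta>)) = \<beta>^2/(2*(\<beta> - \<alpha>))"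
      using 4 by (simp add: field_simps power2_eq_square)
    then show ?thesis using 4 integral_ramp_reflect[of \<alpha> \<beta>] integral_ramp_crossing[of "-\<alpha>" "-\<beta>"]
      by (simp add: ramp_mean_def)
  qed
qed

text \<open>In the frame \<open>(n, t)\<close> at a point of the cut line, let \<open>u\<^sub>i, v\<^sub>i\<close> be the coordinates
  of the vertices.  An affine function \<open>C + S u + B v\<close> whose values at the edge midpoints are the
  edge means of \<open>max 0 u\<close> has slope \<open>S = |T\<^sup>+| / |T|\<close>, e.g. \<open>u\<^sub>1\<^sup>2 / ((u\<^sub>1 - u\<^sub>2) (u\<^sub>1 - u\<^sub>3))\<close>
  when only the first vertex lies on the positive side.\<close>

lemma midpoint_interpolant_slope_cramer:
  fixes C S B u1 u2 u3 v1 v2 v3 m1 m2 m3 :: real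
  assumes "C + S*((u2+u3)/2) + B*((v2+v3)/2) = m1"
    "C + S*((u3+u1)/2) + B*((v3+v1)/2) = m2"
    "C + S*((u1+u2)/2) + B*((v1+v2)/2) = m3"
  shows "S * ((u1-u2)*(v1-v3) - (u1-u3)*(v1-v2)) = 2*((m2-m1)*(v1-v3) - (m3-m1)*(v1-v2))"
proof -
  have d2: "S*(u1-u2) = 2*(m2-m1) - B*(v1-v2)" using assms(1,2) by (simp add: field_simps)
  have d3: "S*(u1-u3) = 2*(m3-m1) - B*(v1-v3)" using assms(1,3) by (simp add: field_simps)
  have "S * ((u1-u2)*(v1-v3) - (u1-u3)*(v1-v2)) = (S*(u1-u2))*(v1-v3) - (S*(u1-u3))*(v1-v2)"
    by (simp add: algebra_simps)
  also have "\<dots> = 2*((m2-m1)*(v1-v3) - (m3-m1)*(v1-v2))" unfolding d2 d3 by (simp add: algebra_simps)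
  finally show ?thesis .
qed

lemma midpoint_interpolant_slope_one_vertex_pos:
  fixes C S B u1 u2 u3 v1 v2 v3 :: real
  assumes E: "(u1-u2)*(v1-v3) - (u1-u3)*(v1-v2) \<noteq> 0"
    and e: "C + S*((u2+u3)/2) + B*((v2+v3)/2) = ramp_mean u2 u3"
    "C + S*((u3+u1)/2) + B*((v3+v1)/2) = ramp_mean u3 u1"
    "C + S*((u1+u2)/2) + B*((v1+v2)/2) = ramp_mean u1 u2"
    and s: "0 < u1" "u2 \<le> 0" "u3 \<le> 0"
  shows "0 \<le> S \<and> S \<le> 1"
proof -
  have m1: "ramp_mean u2 u3 = 0" using s by (simp add: ramp_mean_def)
  have m2: "ramp_mean u3 u1 = u1^2/(2*(u1-u3))"
    using s by (cases "u3 = 0") (auto simp: ramp_mean_def power2_eq_square field_simps)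
  have m3: "ramp_mean u1 u2 = u1^2/(2*(u1-u2))"
    using s by (cases "u2 = 0") (auto simp: ramp_mean_def power2_eq_square field_simps)
  have p2: "u1 - u2 > 0" "u1 - u3 > 0" using s by auto
  define K where "K = (u1-u2)*(u1-u3)"
  have K: "K > 0" unfolding K_def using p2 by simp
  have h: "S * ((u1-u2)*(v1-v3) - (u1-u3)*(v1-v2)) = 2*((ramp_mean u3 u1 - ramp_mean u2 u3)*(v1-v3) - (ramp_mean u1 u2 - ramp_mean u2 u3)*(v1-v2))"
    by (rule midpoint_interpolant_slope_cramer[OF e])
  have hm2: "2 * ramp_mean u3 u1 * (u1-u3) = u1^2" unfolding m2 using p2 by (simp add: field_simps)
  have hm3: "2 * ramp_mean u1 u2 * (u1-u2) = u1^2" unfolding m3 using p2 by (simp add: field_simps)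
  have "(S * K) * ((u1-u2)*(v1-v3) - (u1-u3)*(v1-v2)) = u1^2 * ((u1-u2)*(v1-v3) - (u1-u3)*(v1-v2))"
    using h hm2 hm3 m1 unfolding K_def by algebra
  then have SK: "S * K = u1^2" using E by simp
  have "u1^2 \<le> K" unfolding power2_eq_square K_def
    by (rule mult_mono) (use s in auto)
  moreover have "S = u1^2/K" using SK K by (auto simp: field_simps)
  ultimately show ?thesis using K by simp
qed

lemma midpoint_interpolant_slope_two_vertices_pos:
  fixes C S B u1 u2 u3 v1 v2 v3 :: real
  assumes E: "(u1-u2)*(v1-v3) - (u1-u3)*(v1-v2) \<noteq> 0"
    and e: "C + S*((u2+u3)/2) + B*((v2+v3)/2) = ramp_mean u2 u3"
    "C + S*((u3+u1)/2) + B*((v3+v1)/2) = ramp_mean u3 u1"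
    "C + S*((u1+u2)/2) + B*((v1+v2)/2) = ramp_mean u1 u2"
    and s: "0 < u1" "0 < u2" "u3 < 0"
  shows "0 \<le> S \<and> S \<le> 1"
proof -
  have m1: "ramp_mean u2 u3 = u2^2/(2*(u2-u3))" using s by (simp add: ramp_mean_def)
  have m2: "ramp_mean u3 u1 = u1^2/(2*(u1-u3))" using s by (simp add: ramp_mean_def)
  have m3: "ramp_mean u1 u2 = (u1+u2)/2" using s by (simp add: ramp_mean_def)
  have p2: "u1 - u3 > 0" "u2 - u3 > 0" using s by auto
  define K where "K = (u1-u3)*(u2-u3)"
  have K: "K > 0" unfolding K_def using p2 by simp
  have h: "S * ((u1-u2)*(v1-v3) - (u1-u3)*(v1-v2)) = 2*((ramp_mean u3 u1 - ramp_mean u2 u3)*(v1-v3) - (ramp_mean u1 u2 - ramp_mean u2 u3)*(v1-v2))"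
    by (rule midpoint_interpolant_slope_cramer[OF e])
  have hm1: "2 * ramp_mean u2 u3 * (u2-u3) = u2^2" unfolding m1 using p2 by (simp add: field_simps)
  have hm2: "2 * ramp_mean u3 u1 * (u1-u3) = u1^2" unfolding m2 using p2 by (simp add: field_simps)
  have hm3: "2 * ramp_mean u1 u2 = u1 + u2" unfolding m3 by simp
  have "(S * K) * ((u1-u2)*(v1-v3) - (u1-u3)*(v1-v2)) = (K - u3^2) * ((u1-u2)*(v1-v3) - (u1-u3)*(v1-v2))"
    using h hm1 hm2 hm3 unfolding K_def by algebra
  then have SK: "S * K = K - u3^2" using E by simp
  have "u3^2 \<le> K" unfolding power2_eq_square K_def
    using mult_mono[of "-u3" "u1-u3" "-u3" "u2-u3"] s by auto
  moreover have "S = (K - u3^2)/K" using SK K by (auto simp: field_simps)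
  ultimately show ?thesis using K by (simp add: divide_le_eq_1 zero_le_divide_iff)
qed

lemma midpoint_interpolant_slope_bounds:
  fixes C S B u1 u2 u3 v1 v2 v3 :: real
  assumes E: "(u1-u2)*(v1-v3) - (u1-u3)*(v1-v2) \<noteq> 0"
    and e: "C + S*((u2+u3)/2) + B*((v2+v3)/2) = ramp_mean u2 u3"
    "C + S*((u3+u1)/2) + B*((v3+v1)/2) = ramp_mean u3 u1"
    "C + S*((u1+u2)/2) + B*((v1+v2)/2) = ramp_mean u1 u2"
    and pos: "0 < u1 \<or> 0 < u2 \<or> 0 < u3" and neg: "u1 < 0 \<or> u2 < 0 \<or> u3 < 0"
  shows "0 \<le> S \<and> S \<le> 1"
proof -
  have E2: "(u2-u3)*(v2-v1) - (u2-u1)*(v2-v3) \<noteq> 0" using E by (simp add: algebra_simps)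
  have E3: "(u3-u1)*(v3-v2) - (u3-u2)*(v3-v1) \<noteq> 0" using E by (simp add: algebra_simps)
  note A1 = midpoint_interpolant_slope_one_vertex_pos[OF E e] midpoint_interpolant_slope_two_vertices_pos[OF E e]
  note A2 = midpoint_interpolant_slope_one_vertex_pos[OF E2 e(2) e(3) e(1)] midpoint_interpolant_slope_two_vertices_pos[OF E2 e(2) e(3) e(1)]
  note A3 = midpoint_interpolant_slope_one_vertex_pos[OF E3 e(3) e(1) e(2)] midpoint_interpolant_slope_two_vertices_pos[OF E3 e(3) e(1) e(2)]
  show ?thesis
    using pos neg A1 A2 A3 by linarith
qed

section \<open>Interface conditions\<close>

lemma P1v_jump_across_segment:
  fixes n p p' :: pt
  assumes P: "P1v vp" "P1v vm" and cont: "\<forall>x\<in>open_segment p p'. vp x = vm x"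
    and div: "divg vp = divg vm"
    and "p \<noteq> p'" and n: "norm n = 1" "n \<bullet> (p' - p) = 0"
  obtains c where "\<And>x. vp x = vm x + (c * (n \<bullet> (x - p))) *\<^sub>R (snd n, - fst n)"
proof -
  define t where "t = (snd n, - fst n)"
  define d1 where "d1 x = fst (vp x) + (- 1) * fst (vm x)" for x
  define d2 where "d2 x = snd (vp x) + (- 1) * snd (vm x)" for x
  have P1: "P1 (\<lambda>x. fst (vp x))" "P1 (\<lambda>x. fst (vm x))" "P1 (\<lambda>x. snd (vp x))" "P1 (\<lambda>x. snd (vm x))"
    using P by (simp_all add: P1v_def)
  have d: "P1 d1" "P1 d2"
    unfolding d1_def d2_def by (rule P1_linear_combination(1), fact+)+
  have vanish: "d1 x = (grad d1 \<bullet> n) * (n \<bullet> (x - p))" "d2 x = (grad d2 \<bullet> n) * (n \<bullet> (x - p))" for x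
    using cont by (intro P1_vanishing_on_segment[OF _ _ \<open>p \<noteq> p'\<close> n] d; simp add: d1_def d2_def)+
  define \<kappa> where "\<kappa> = (grad d1 \<bullet> n, grad d2 \<bullet> n)"
  have jump: "vp x = vm x + (n \<bullet> (x - p)) *\<^sub>R \<kappa>" for x
    using vanish[of x] by (simp add: \<kappa>_def d1_def d2_def prod_eq_iff algebra_simps)
  have "(\<lambda>x. fst (vp x)) = (\<lambda>x. fst (vm x) + fst \<kappa> * (n \<bullet> (x - p)))"
    "(\<lambda>x. snd (vp x)) = (\<lambda>x. snd (vm x) + snd \<kappa> * (n \<bullet> (x - p)))"
    by (simp_all add: jump mult.commute)
  then have "grad (\<lambda>x. fst (vp x)) = grad (\<lambda>x. fst (vm x)) + fst \<kappa> *\<^sub>R n"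
    "grad (\<lambda>x. snd (vp x)) = grad (\<lambda>x. snd (vm x)) + snd \<kappa> *\<^sub>R n"
    using P1_linear_combination(2)[OF P1(2) P1_inner_diff(1)] P1_linear_combination(2)[OF P1(4) P1_inner_diff(1)]
    by (simp_all add: P1_inner_diff(2))
  then have "n \<bullet> \<kappa> = 0"
    using div unfolding divg_def by (simp add: grad_def prod_eq_iff inner_prod_def algebra_simps)
  then have "\<kappa> = (t \<bullet> \<kappa>) *\<^sub>R t"
    using unit_frame_decomposition[OF n(1), of \<kappa>] by (simp add: t_def)
  then show ?thesis
    using that[of "t \<bullet> \<kappa>"] jump by (metis t_def scaleR_scaleR mult.commute)
qed

lemma interface_stress_jump:
  fixes n p :: pt and c mup mum qp qm :: real
  assumes n: "norm n = 1" and mup: "mup > 0" and vm: "P1v vm" and g: "P1 g"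
    and vp: "\<And>x. vp x = vm x + (c * (n \<bullet> (x - p))) *\<^sub>R (snd n, - fst n)"
    and sigma: "sigma_n mup vp qp n = sigma_n mum vm qm n"
  defines "vJ \<equiv> \<lambda>x. vm x + (c * g x) *\<^sub>R (snd n, - fst n)"
  shows "sigma_n (mum - mup) vJ 0 n \<bullet> n = qm - qp"
    and "c * (1 + (mum / mup - 1) * (grad g \<bullet> n)) = sigma_n (mum / mup - 1) vJ 0 n \<bullet> (snd n, - fst n)"
proof -
  obtain n1 n2 where n12: "n = (n1, n2)" by (cases n)
  have nn: "n1\<^sup>2 + n2\<^sup>2 = 1" using n n12 by (simp add: norm_Pair)
  have P1: "P1 (\<lambda>x. fst (vm x))" "P1 (\<lambda>x. snd (vm x))" using vm by (simp_all add: P1v_def)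
  have comps:
    "(\<lambda>x. fst (vp x)) = (\<lambda>x. fst (vm x) + (c * n2) * (n \<bullet> (x - p)))"
    "(\<lambda>x. snd (vp x)) = (\<lambda>x. snd (vm x) + (- c * n1) * (n \<bullet> (x - p)))"
    "(\<lambda>x. fst (vJ x)) = (\<lambda>x. fst (vm x) + (c * n2) * g x)"
    "(\<lambda>x. snd (vJ x)) = (\<lambda>x. snd (vm x) + (- c * n1) * g x)"
    by (simp_all add: vp vJ_def n12 algebra_simps)
  have pd_line: "pd1 (\<lambda>x. (n1, n2) \<bullet> (x - p)) = n1" "pd2 (\<lambda>x. (n1, n2) \<bullet> (x - p)) = n2"
    using P1_inner_diff(2)[of "(n1, n2)" p] by (simp_all add: grad_def)
  define A11 where "A11 = pd1 (\<lambda>x. fst (vm x))"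
  define A12 where "A12 = pd2 (\<lambda>x. fst (vm x))"
  define A21 where "A21 = pd1 (\<lambda>x. snd (vm x))"
  define A22 where "A22 = pd2 (\<lambda>x. snd (vm x))"
  define g1 where "g1 = pd1 g"
  define g2 where "g2 = pd2 g"
  note pd = pd_linear_combination[OF P1(1) P1_inner_diff(1)] pd_linear_combination[OF P1(2) P1_inner_diff(1)]
    pd_linear_combination[OF P1(1) g] pd_linear_combination[OF P1(2) g]
  note unfold_all = sigma_n_def Let_def comps pd pd_line n12
    A11_def[symmetric] A12_def[symmetric] A21_def[symmetric] A22_def[symmetric] g1_def[symmetric] g2_def[symmetric]
  have s1: "2*mup*((A11 + c*n2*n1)*n1 + ((A12 + c*n2*n2) + (A21 + -c*n1*n1))/2*n2) - qp*n1
      = 2*mum*(A11*n1 + (A12+A21)/2*n2) - qm*n1"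
   and s2: "2*mup*(((A12 + c*n2*n2) + (A21 + -c*n1*n1))/2*n1 + (A22 + -c*n1*n2)*n2) - qp*n2
      = 2*mum*((A12+A21)/2*n1 + A22*n2) - qm*n2"
    using sigma unfolding unfold_all by simp_all
  show "sigma_n (mum - mup) vJ 0 n \<bullet> n = qm - qp"
    unfolding unfold_all using nn s1 s2 by simp algebra
  define r where "r = mum / mup - 1"
  have "mup * r = mum - mup" using mup by (simp add: r_def field_simps)
  then have "mup * (c * (1 + r * (g1 * n1 + g2 * n2))
      - (2 * r * ((A11 + c*n2*g1) * n1 + ((A12 + c*n2*g2) + (A21 + -c*n1*g1)) / 2 * n2) * n2
         - 2 * r * (((A12 + c*n2*g2) + (A21 + -c*n1*g1)) / 2 * n1 + (A22 + -c*n1*g2) * n2) * n1)) = 0"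
    using nn s1 s2 by algebra
  then have "c * (1 + r * (g1 * n1 + g2 * n2))
      = 2 * r * ((A11 + c*n2*g1) * n1 + ((A12 + c*n2*g2) + (A21 + -c*n1*g1)) / 2 * n2) * n2
         - 2 * r * (((A12 + c*n2*g2) + (A21 + -c*n1*g1)) / 2 * n1 + (A22 + -c*n1*g2) * n2) * n1"
    using mup by simp
  then show "c * (1 + (mum / mup - 1) * (grad g \<bullet> n)) = sigma_n (mum / mup - 1) vJ 0 n \<bullet> (snd n, - fst n)"
    unfolding unfold_all r_def[symmetric] by (simp add: grad_def g1_def g2_def)
qed

section \<open>Geometry of the cut triangle\<close>

lemma infdist_line:
  fixes n p p' x :: pt
  assumes n: "norm n = 1" "n \<bullet> (p' - p) = 0" and "p \<noteq> p'"
  shows "infdist x (affine hull {p, p'}) = \<bar>n \<bullet> (x - p)\<bar>"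
proof -
  let ?L = "affine hull {p, p'}"
  define t where "t = (snd n, - fst n)"
  have on_line: "n \<bullet> (y - p) = 0" if "y \<in> ?L" for y
  proof -
    from that obtain u s where "u + s = 1" "y = u *\<^sub>R p + s *\<^sub>R p'"
      unfolding affine_hull_2 by blast
    then have "y - p = s *\<^sub>R (p' - p)" by (simp add: algebra_simps flip: scaleR_add_left)
    then show ?thesis using n(2) by simp
  qed
  have lower: "\<bar>n \<bullet> (x - p)\<bar> \<le> dist x y" if "y \<in> ?L" for y
  proof -
    have "n \<bullet> (x - p) = n \<bullet> (x - y)" using on_line[OF that] by (simp add: inner_diff_right)
    then show ?thesis using Cauchy_Schwarz_ineq2[of n "x - y"] n(1) by (simp add: dist_norm)
  qed
  define y0 where "y0 = x - (n \<bullet> (x - p)) *\<^sub>R n"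
  define c where "c = t \<bullet> (p' - p)"
  have "c \<noteq> 0"
    unfolding c_def t_def using tangent_inner_neq_0[OF n] \<open>p \<noteq> p'\<close> by simp
  have "p' - p = (n \<bullet> (p' - p)) *\<^sub>R n + c *\<^sub>R t"
    unfolding c_def t_def by (rule unit_frame_decomposition[OF n(1)])
  then have dp: "p' - p = c *\<^sub>R t" using n(2) by simp
  have "x - p = (n \<bullet> (x - p)) *\<^sub>R n + (t \<bullet> (x - p)) *\<^sub>R t"
    unfolding t_def by (rule unit_frame_decomposition[OF n(1)])
  then have "y0 - p = (t \<bullet> (x - p)) *\<^sub>R t" unfolding y0_def by (simp add: algebra_simps)
  then have "y0 - p = ((t \<bullet> (x - p)) / c) *\<^sub>R (p' - p)"
    unfolding dp using \<open>c \<noteq> 0\<close> by simp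
  then have "y0 = (1 - (t \<bullet> (x - p)) / c) *\<^sub>R p + ((t \<bullet> (x - p)) / c) *\<^sub>R p'"
    by (simp add: algebra_simps)
  then have "y0 \<in> ?L" unfolding affine_hull_2 by (intro CollectI exI conjI) auto
  then have "infdist x ?L \<le> \<bar>n \<bullet> (x - p)\<bar>"
    using infdist_le[of y0 ?L x] n(1) by (simp add: y0_def dist_norm)
  moreover have "?L \<noteq> {}" by (simp add: hull_inc)
  then have "\<bar>n \<bullet> (x - p)\<bar> \<le> infdist x ?L"
    unfolding infdist_notempty[OF \<open>?L \<noteq> {}\<close>] by (rule cINF_greatest) (rule lower)
  ultimately show ?thesis by simp
qed

lemma convex_hull_halfplane_vertex:
  assumes "x \<in> convex hull S" "0 < n \<bullet> (x - p)"
  shows "\<exists>a\<in>S. 0 < n \<bullet> (a - (p :: pt))"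
proof (rule ccontr)
  assume "\<not> ?thesis"
  then have "S \<subseteq> {y. n \<bullet> y \<le> n \<bullet> p}" by (auto simp: inner_diff_right)
  then have "convex hull S \<subseteq> {y. n \<bullet> y \<le> n \<bullet> p}"
    by (rule hull_minimal) (rule convex_halfspace_le)
  with assms show False by (auto simp: inner_diff_right)
qed

lemma measure_triangle_pos:
  assumes "\<not> collinear {a1, a2, a3 :: pt}"
  shows "0 < measure lebesgue (convex hull {a1, a2, a3})"
proof -
  let ?T = "convex hull {a1, a2, a3}"
  have "a1 \<noteq> a2" "a1 \<noteq> a3" "a2 \<noteq> a3" using assms by (auto simp: insert_commute)
  then have "card {a1, a2, a3} = Suc DIM(pt)" by simp
  moreover have "\<not> affine_dependent {a1, a2, a3}"
    using assms collinear_3_eq_affine_dependent by blast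
  ultimately have "interior ?T \<noteq> {}" using interior_convex_hull_eq_empty by blast
  then have "\<not> negligible ?T" using negligible_convex_interior[of ?T] by simp
  moreover have "?T \<in> lmeasurable" by (intro lmeasurable_compact compact_convex_hull) simp
  ultimately have "measure lebesgue ?T \<noteq> 0" using negligible_iff_measure0 by blast
  then show ?thesis using measure_nonneg[of lebesgue ?T] by linarith
qed

lemma mean_two_valued:
  fixes T :: "pt set" and n p :: pt and q :: "pt \<Rightarrow> real"
  assumes T: "compact T" "0 < measure lebesgue T" and "n \<noteq> 0"
    and qp: "\<And>x. x \<in> T \<Longrightarrow> 0 < n \<bullet> (x - p) \<Longrightarrow> q x = qp"
    and qm: "\<And>x. x \<in> T \<Longrightarrow> n \<bullet> (x - p) < 0 \<Longrightarrow> q x = qm"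
  defines "z \<equiv> \<lambda>x. if x \<in> {x \<in> T. 0 < n \<bullet> (x - p)} then - 1 else 0 :: real"
  shows "mean T q = qm - (qp - qm) * mean T z"
proof -
  define Tp where "Tp = {x \<in> T. 0 < n \<bullet> (x - p)}"
  have TL: "T \<in> lmeasurable" by (rule lmeasurable_compact[OF T(1)])
  have "Tp \<in> lmeasurable"
  proof -
    have "Tp = T \<inter> {x. n \<bullet> p < n \<bullet> x}" by (auto simp: Tp_def inner_diff_right)
    then show ?thesis
      using lmeasurable_compact[OF T(1)] open_halfspace_gt[of "n \<bullet> p" n]
      by (simp add: fmeasurable_Int_fmeasurable)
  qed
  then have zT: "z integrable_on T"
  proof (rule integrable_on_superset[OF integrable_eq[OF integrable_on_const]])
    show "(- 1) = z x" if "x \<in> Tp" for x using that by (simp add: z_def Tp_def)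
  qed (auto simp: z_def Tp_def)
  have "integral T q = integral T (\<lambda>x. qm - (qp - qm) * z x)"
  proof (rule integral_spike[of "{x. n \<bullet> x = n \<bullet> p}"])
    show "negligible {x. n \<bullet> x = n \<bullet> p}" using \<open>n \<noteq> 0\<close> by (intro negligible_hyperplane) simp
    fix x assume x: "x \<in> T - {x. n \<bullet> x = n \<bullet> p}"
    then consider "0 < n \<bullet> (x - p)" | "n \<bullet> (x - p) < 0" by (fastforce simp: inner_diff_right)
    then show "qm - (qp - qm) * z x = q x"
      by cases (use x qp qm in \<open>auto simp: z_def\<close>)
  qed
  also have "\<dots> = integral T (\<lambda>x. qm) - integral T (\<lambda>x. (qp - qm) * z x)"
    by (rule integral_diff) (use integrable_on_const[OF TL] integrable_on_cmult_left[OF zT] in auto)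
  also have "integral T (\<lambda>x. qm) = qm * measure lebesgue T"
    using lmeasure_integral[OF TL] integral_mult_right[of T qm "\<lambda>x. 1"] by simp
  finally have "integral T q = qm * measure lebesgue T - (qp - qm) * integral T z" by simp
  then show ?thesis unfolding mean_def using T(2) by (simp add: field_simps)
qed

text \<open>The cut line is \<open>{x. n \<bullet> (x - p) = 0}\<close>; on the triangle, \<open>ramp\<close> is the function \<open>w\<close>
  of the statement (lemma \<open>infdist_line\<close>).\<close>

locale cut_triangle =
  fixes a1 a2 a3 p p' n :: pt
  assumes not_collinear: "\<not> collinear {a1, a2, a3}"
    and p_neq_p': "p \<noteq> p'"
    and n_unit: "norm n = 1"
    and n_normal: "n \<bullet> (p' - p) = 0"
    and vertex_pos: "\<exists>a\<in>{a1, a2, a3}. 0 < n \<bullet> (a - p)"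
    and vertex_neg: "\<exists>a\<in>{a1, a2, a3}. n \<bullet> (a - p) < 0"
begin

definition ramp :: "pt \<Rightarrow> real" where
  "ramp x = max 0 (n \<bullet> (x - p))"

lemma continuous_on_ramp: "continuous_on S ramp"
  unfolding ramp_def by (intro continuous_intros)

lemma edge_avg_ramp: "edge_avg a b ramp = ramp_mean (n \<bullet> (a - p)) (n \<bullet> (b - p))"
proof -
  have "n \<bullet> (a + s *\<^sub>R (b - a) - p) = n \<bullet> (a - p) + s * (n \<bullet> (b - p) - n \<bullet> (a - p))" for s
    by (simp add: inner_diff_right inner_add_right algebra_simps)
  then show ?thesis unfolding edge_avg_def ramp_def by (simp add: integral_ramp)
qed

lemma edge_point_in_triangle:
  assumes "j \<in> {1, 2, 3}" "s \<in> {0..1}"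
  shows "fst (edge a1 a2 a3 j) + s *\<^sub>R (snd (edge a1 a2 a3 j) - fst (edge a1 a2 a3 j))
           \<in> convex hull {a1, a2, a3}"
proof -
  have "fst (edge a1 a2 a3 j) \<in> convex hull {a1, a2, a3}" "snd (edge a1 a2 a3 j) \<in> convex hull {a1, a2, a3}"
    by (simp_all add: edge_def hull_inc)
  from convexD[OF convex_convex_hull this, of "1 - s" s] assms(2) show ?thesis
    by (simp add: algebra_simps)
qed

lemma edge_not_on_line:
  assumes "j \<in> {1, 2, 3}"
  shows "n \<bullet> (fst (edge a1 a2 a3 j) - p) \<noteq> 0 \<or> n \<bullet> (snd (edge a1 a2 a3 j) - p) \<noteq> 0"
proof (rule ccontr)
  assume "\<not> ?thesis"
  then have on_line: "n \<bullet> (fst (edge a1 a2 a3 j) - p) = 0" "n \<bullet> (snd (edge a1 a2 a3 j) - p) = 0"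
    by simp_all
  define c where "c = (if j = 1 then a1 else if j = 2 then a2 else a3)"
  have "{a1, a2, a3} = {fst (edge a1 a2 a3 j), snd (edge a1 a2 a3 j), c}"
    using assms by (auto simp: edge_def c_def)
  then have "0 < n \<bullet> (c - p)" "n \<bullet> (c - p) < 0"
    using vertex_pos vertex_neg on_line by auto
  then show False by simp
qed

lemma eavg_cong_off_line:
  assumes j: "j \<in> {1, 2, 3}"
    and fg: "\<And>x. x \<in> convex hull {a1, a2, a3} \<Longrightarrow> n \<bullet> (x - p) \<noteq> 0 \<Longrightarrow> f x = g x"
  shows "eavg a1 a2 a3 j f = eavg a1 a2 a3 j g"
proof -
  obtain a b where e: "edge a1 a2 a3 j = (a, b)" by (cases "edge a1 a2 a3 j")
  define la where "la = n \<bullet> (a - p)"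
  define lb where "lb = n \<bullet> (b - p)"
  have "n \<bullet> (a + s *\<^sub>R (b - a) - p) \<noteq> 0" if "s \<noteq> la / (la - lb)" for s
  proof -
    have "n \<bullet> (a + s *\<^sub>R (b - a) - p) = la + s * (lb - la)"
      unfolding la_def lb_def by (simp add: inner_diff_right inner_add_right algebra_simps)
    moreover have "la \<noteq> 0 \<or> lb \<noteq> 0" using edge_not_on_line[OF j] e la_def lb_def by simp
    ultimately show ?thesis using that by (cases "la = lb") (auto simp: field_simps)
  qed
  then have agree: "f (a + s *\<^sub>R (b - a)) = g (a + s *\<^sub>R (b - a))"
    if "s \<in> {0..1} - {la / (la - lb)}" for s
    using that fg edge_point_in_triangle[OF j, of s] e by auto
  show ?thesis
    unfolding eavg_def e edge_avg_def prod.case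
    by (rule integral_spike[of "{la / (la - lb)}"]) (simp_all add: agree)
qed

lemma pi_cr_add_ramp:
  assumes g: "P1 g"
    and f: "\<And>x. x \<in> convex hull {a1, a2, a3} \<Longrightarrow> n \<bullet> (x - p) \<noteq> 0 \<Longrightarrow> f x = g x + k * ramp x"
  shows "pi_cr a1 a2 a3 f = (\<lambda>x. g x + k * pi_cr a1 a2 a3 ramp x)"
proof (rule pi_cr_unique[OF not_collinear])
  note \<pi>ramp = pi_cr_interpolates[OF not_collinear, of ramp]
  show "P1 (\<lambda>x. g x + k * pi_cr a1 a2 a3 ramp x)"
    by (rule P1_linear_combination(1)[OF g \<pi>ramp(1)])
  show "\<forall>j\<in>{1, 2, 3}. eavg a1 a2 a3 j (\<lambda>x. g x + k * pi_cr a1 a2 a3 ramp x) = eavg a1 a2 a3 j f"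
  proof
    fix j :: nat assume j: "j \<in> {1, 2, 3}"
    have "eavg a1 a2 a3 j (\<lambda>x. g x + k * pi_cr a1 a2 a3 ramp x)
        = eavg a1 a2 a3 j g + k * eavg a1 a2 a3 j ramp"
      using eavg_add_scaled[OF P1_continuous_on[OF g] P1_continuous_on[OF \<pi>ramp(1)]] \<pi>ramp(2)[rule_format, OF j]
      by simp
    also have "\<dots> = eavg a1 a2 a3 j (\<lambda>x. g x + k * ramp x)"
      using eavg_add_scaled[OF P1_continuous_on[OF g] continuous_on_ramp] by simp
    also have "\<dots> = eavg a1 a2 a3 j f"
      by (rule eavg_cong_off_line[OF j]) (simp add: f)
    finally show "eavg a1 a2 a3 j (\<lambda>x. g x + k * pi_cr a1 a2 a3 ramp x) = eavg a1 a2 a3 j f" .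
  qed
qed

lemma grad_pi_cr_ramp_bounds:
  "0 \<le> grad (pi_cr a1 a2 a3 ramp) \<bullet> n \<and> grad (pi_cr a1 a2 a3 ramp) \<bullet> n \<le> 1"
proof -
  define g where "g = pi_cr a1 a2 a3 ramp"
  define t where "t = (snd n, - fst n)"
  define u where "u a = n \<bullet> (a - p)" for a
  define v where "v a = t \<bullet> (a - p)" for a
  have g: "P1 g" "\<forall>j\<in>{1, 2, 3}. eavg a1 a2 a3 j g = eavg a1 a2 a3 j ramp"
    unfolding g_def by (rule pi_cr_interpolates[OF not_collinear])+
  have g_mid: "g (edge_midpoint a1 a2 a3 j) = eavg a1 a2 a3 j ramp" if "j \<in> {1, 2, 3}" for j
    using g(2)[rule_format, OF that] eavg_P1[OF g(1), of a1 a2 a3 j] by simp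
  have "g (midpoint a b) = ramp_mean (u a) (u b)" if "edge a1 a2 a3 j = (a, b)" "j \<in> {1, 2, 3}" for a b j
    using g_mid[OF that(2)] that(1) by (simp add: edge_midpoint_def eavg_def edge_avg_ramp u_def)
  moreover have "g (midpoint a b) = g p + (grad g \<bullet> n) * ((u a + u b) / 2) + (grad g \<bullet> t) * ((v a + v b) / 2)"
    for a b
    using P1_unit_frame_expansion[OF g(1) n_unit, of "midpoint a b" p]
    by (simp add: u_def v_def t_def inner_midpoint_diff)
  ultimately have e: "g p + (grad g \<bullet> n) * ((u a + u b) / 2) + (grad g \<bullet> t) * ((v a + v b) / 2)
      = ramp_mean (u a) (u b)" if "edge a1 a2 a3 j = (a, b)" "j \<in> {1, 2, 3}" for a b j
    using that by metis
  have "(u a1 - u a2) * (v a1 - v a3) - (u a1 - u a3) * (v a1 - v a2) \<noteq> 0"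
    using orient_unit_frame[OF n_unit, where q = p and a = a1 and b = a2 and c = a3] orient_neq_0_if_not_collinear[OF not_collinear]
    unfolding u_def v_def t_def by simp
  from midpoint_interpolant_slope_bounds[OF this e[of 1 a2 a3] e[of 2 a3 a1] e[of 3 a1 a2]]
  show ?thesis
    using vertex_pos vertex_neg by (auto simp: g_def u_def edge_def)
qed

lemma IFE_jump_form:
  fixes T Tp Tm :: "pt set"
  assumes T_def: "T = convex hull {a1, a2, a3}"
    and Tp_def: "Tp = {x \<in> T. n \<bullet> (x - p) > 0}" and Tm_def: "Tm = {x \<in> T. n \<bullet> (x - p) < 0}"
    and ife: "IFE Tp Tm (open_segment p p') n mup mum v q"
  obtains vm vp c qp qm where "P1v vm" "\<And>x. vp x = vm x + (c * (n \<bullet> (x - p))) *\<^sub>R (snd n, - fst n)"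
    "sigma_n mup vp qp n = sigma_n mum vm qm n"
    "\<And>x. x \<in> T \<Longrightarrow> n \<bullet> (x - p) \<noteq> 0 \<Longrightarrow> v x = vm x + (c * ramp x) *\<^sub>R (snd n, - fst n)"
    "\<forall>x\<in>Tp. q x = qp" "\<forall>x\<in>Tm. q x = qm"
proof -
  from ife obtain vp vm qp qm where
    IF: "P1v vp" "P1v vm" "\<forall>x\<in>Tp. v x = vp x \<and> q x = qp" "\<forall>x\<in>Tm. v x = vm x \<and> q x = qm"
      "sigma_n mup vp qp n - sigma_n mum vm qm n = 0" "\<forall>x\<in>open_segment p p'. vp x = vm x"
      "divg vp - divg vm = 0"
    unfolding IFE_def by blast
  obtain c where vp: "\<And>x. vp x = vm x + (c * (n \<bullet> (x - p))) *\<^sub>R (snd n, - fst n)"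
    using P1v_jump_across_segment[OF IF(1,2,6) _ p_neq_p' n_unit n_normal] IF(7) by auto
  have v: "v x = vm x + (c * ramp x) *\<^sub>R (snd n, - fst n)" if "x \<in> T" "n \<bullet> (x - p) \<noteq> 0" for x
  proof (cases "0 < n \<bullet> (x - p)")
    case True
    with that have "x \<in> Tp" by (simp add: Tp_def)
    with IF(3) vp True show ?thesis by (simp add: ramp_def)
  next
    case False
    with that have "x \<in> Tm" by (auto simp: Tm_def)
    with IF(4) False show ?thesis by (simp add: ramp_def zero_prod_def)
  qed
  have sigma: "sigma_n mup vp qp n = sigma_n mum vm qm n" using IF(5) by simp
  show ?thesis using IF(3,4) by (intro that[OF IF(2) vp sigma v]) auto
qed

lemma interface_denominator_pos:
  assumes "mup > 0" "mum > 0"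
  shows "0 < 1 + (mum / mup - 1) * (grad (pi_cr a1 a2 a3 ramp) \<bullet> n)"
proof -
  define S where "S = grad (pi_cr a1 a2 a3 ramp) \<bullet> n"
  have S: "0 \<le> S" "S \<le> 1" using grad_pi_cr_ramp_bounds by (simp_all add: S_def)
  have r: "0 < mum / mup" using assms by simp
  have "0 < (1 - S) + mum / mup * S"
  proof (cases "S = 1")
    case True
    with r show ?thesis by simp
  next
    case False
    with S r show ?thesis by (intro add_pos_nonneg mult_nonneg_nonneg) auto
  qed
  also have "(1 - S) + mum / mup * S = 1 + (mum / mup - 1) * S" by (simp add: algebra_simps)
  finally show ?thesis by (simp add: S_def)
qed

lemma IFE_decomposition:
  fixes mup mum :: real and v :: "pt \<Rightarrow> pt" and q :: "pt \<Rightarrow> real" and T Tp Tm :: "pt set"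
  assumes T_def: "T = convex hull {a1, a2, a3}"
    and Tp_def: "Tp = {x \<in> T. n \<bullet> (x - p) > 0}" and Tm_def: "Tm = {x \<in> T. n \<bullet> (x - p) < 0}"
    and mu: "mup > 0" "mum > 0" and ife: "IFE Tp Tm (open_segment p p') n mup mum v q"
  defines "t \<equiv> (snd n, - fst n)"
    and "vJ0 \<equiv> \<lambda>x. (pi_cr a1 a2 a3 (\<lambda>x. fst (v x)) x, pi_cr a1 a2 a3 (\<lambda>x. snd (v x)) x)"
    and "z \<equiv> \<lambda>x. if x \<in> Tp then - 1 else 0 :: real"
    and "den \<equiv> 1 + (mum / mup - 1) * (grad (pi_cr a1 a2 a3 ramp) \<bullet> n)"
  shows "x \<in> Tp \<union> Tm \<Longrightarrow>
      v x = vJ0 x + (sigma_n (mum / mup - 1) vJ0 0 n \<bullet> t / den) *\<^sub>R ((ramp x - pi_cr a1 a2 a3 ramp x) *\<^sub>R t)"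
    and "x \<in> Tp \<union> Tm \<Longrightarrow> q x = mean T q + (sigma_n (mum - mup) vJ0 0 n \<bullet> n) * (z x - mean T z)"
proof -
  obtain vm vp c qp qm where vm: "P1v vm"
    and vp: "\<And>x. vp x = vm x + (c * (n \<bullet> (x - p))) *\<^sub>R (snd n, - fst n)"
    and sigma: "sigma_n mup vp qp n = sigma_n mum vm qm n"
    and v: "\<And>x. x \<in> T \<Longrightarrow> n \<bullet> (x - p) \<noteq> 0 \<Longrightarrow> v x = vm x + (c * ramp x) *\<^sub>R (snd n, - fst n)"
    and q: "\<forall>x\<in>Tp. q x = qp" "\<forall>x\<in>Tm. q x = qm"
    using IFE_jump_form[OF T_def Tp_def Tm_def ife] by blast
  have "pi_cr a1 a2 a3 (\<lambda>x. fst (v x)) = (\<lambda>x. fst (vm x) + (c * snd n) * pi_cr a1 a2 a3 ramp x)"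
    "pi_cr a1 a2 a3 (\<lambda>x. snd (v x)) = (\<lambda>x. snd (vm x) + (- c * fst n) * pi_cr a1 a2 a3 ramp x)"
    using vm by (intro pi_cr_add_ramp; simp add: P1v_def v T_def)+
  then have vJ0: "vJ0 = (\<lambda>x. vm x + (c * pi_cr a1 a2 a3 ramp x) *\<^sub>R t)"
    by (simp add: vJ0_def t_def prod_eq_iff fun_eq_iff)
  note stress = interface_stress_jump[OF n_unit mu(1) vm pi_cr_interpolates(1)[OF not_collinear, of ramp]
      vp sigma, folded t_def]
  have "sigma_n (mum / mup - 1) vJ0 0 n \<bullet> t = c * den"
    using stress(2) by (simp add: den_def vJ0)
  then have c2: "sigma_n (mum / mup - 1) vJ0 0 n \<bullet> t / den = c"
    using interface_denominator_pos[OF mu] by (simp add: den_def)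
  show "v x = vJ0 x + (sigma_n (mum / mup - 1) vJ0 0 n \<bullet> t / den) *\<^sub>R ((ramp x - pi_cr a1 a2 a3 ramp x) *\<^sub>R t)"
    if "x \<in> Tp \<union> Tm"
    using that v[of x] unfolding c2 by (auto simp: vJ0 t_def Tp_def Tm_def algebra_simps)
  have mean: "mean T q = qm - (qp - qm) * mean T z"
    unfolding z_def Tp_def
  proof (rule mean_two_valued)
    show "compact T" unfolding T_def by (intro compact_convex_hull) simp
    show "0 < measure lebesgue T" unfolding T_def by (rule measure_triangle_pos[OF not_collinear])
    show "n \<noteq> 0" using n_unit by auto
  qed (use q in \<open>auto simp: Tp_def Tm_def\<close>)
  have c1: "sigma_n (mum - mup) vJ0 0 n \<bullet> n = qm - qp"
    using stress(1) by (simp add: vJ0)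
  have pieces: "q x = qp \<and> z x = - 1 \<or> q x = qm \<and> z x = 0" if "x \<in> Tp \<union> Tm" for x
  proof -
    have "Tp \<inter> Tm = {}" by (auto simp: Tp_def Tm_def)
    then show ?thesis using that q by (auto simp: z_def)
  qed
  show "q x = mean T q + (sigma_n (mum - mup) vJ0 0 n \<bullet> n) * (z x - mean T z)" if "x \<in> Tp \<union> Tm"
    using pieces[OF that] unfolding mean c1 by (auto simp: algebra_simps)
qed

lemma IFE_unisolvent:
  fixes T Tp Tm :: "pt set"
  assumes T_def: "T = convex hull {a1, a2, a3}"
    and Tp_def: "Tp = {x \<in> T. n \<bullet> (x - p) > 0}" and Tm_def: "Tm = {x \<in> T. n \<bullet> (x - p) < 0}"
    and mu: "mup > 0" "mum > 0"
    and ife: "IFE Tp Tm (open_segment p p') n mup mum v q" "IFE Tp Tm (open_segment p p') n mup mum v' q'"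
    and dofs: "\<forall>i\<in>{1..7}. Ndof a1 a2 a3 i v q = Ndof a1 a2 a3 i v' q'"
    and x: "x \<in> Tp \<union> Tm"
  shows "v x = v' x \<and> q x = q' x"
proof -
  have N: "Ndof a1 a2 a3 i v q = Ndof a1 a2 a3 i v' q'" if "i \<in> {1..7}" for i
    using dofs that by blast
  have "pi_cr a1 a2 a3 (\<lambda>x. fst (v x)) = pi_cr a1 a2 a3 (\<lambda>x. fst (v' x))"
    using N[of 1] N[of 2] N[of 3] by (intro pi_cr_cong) (simp add: Ndof_def)
  moreover have "pi_cr a1 a2 a3 (\<lambda>x. snd (v x)) = pi_cr a1 a2 a3 (\<lambda>x. snd (v' x))"
    using N[of 4] N[of 5] N[of 6] by (intro pi_cr_cong) (simp add: Ndof_def)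
  moreover have "mean T q = mean T q'" using N[of 7] by (simp add: Ndof_def T_def)
  ultimately show ?thesis
    using IFE_decomposition[OF T_def Tp_def Tm_def mu ife(1) x]
      IFE_decomposition[OF T_def Tp_def Tm_def mu ife(2) x]
    by simp
qed

end

theorem lemma4p4:
  fixes a1 a2 a3 p p' n :: pt
    and T Tp Tm G :: "pt set"
    and mup mum :: real
  assumes tri: "\<not> collinear {a1, a2, a3}"
    and T_def: "T = convex hull {a1, a2, a3}"
    and endpoints: "p \<in> frontier T" "p' \<in> frontier T" "p \<noteq> p'"
    and n_unit: "norm n = 1" and n_normal: "n \<bullet> (p' - p) = 0"
    and G_def: "G = open_segment p p'"
    and Tp_def: "Tp = {x \<in> T. n \<bullet> (x - p) > 0}"
    and Tm_def: "Tm = {x \<in> T. n \<bullet> (x - p) < 0}"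
    and nonempty: "Tp \<noteq> {}" "Tm \<noteq> {}"
    and mu_pos: "mup > 0" "mum > 0"
  shows
    "(\<forall>v q v' q'. IFE Tp Tm G n mup mum v q \<and> IFE Tp Tm G n mup mum v' q' \<and>
        (\<forall>i\<in>{1..7}. Ndof a1 a2 a3 i v q = Ndof a1 a2 a3 i v' q') \<longrightarrow>
        (\<forall>x\<in>Tp \<union> Tm. v x = v' x \<and> q x = q' x))
     \<and>
     (\<forall>v q. IFE Tp Tm G n mup mum v q \<longrightarrow>
       (let N = (\<lambda>i. Ndof a1 a2 a3 i v q);
            t = (snd n, - fst n);
            vJ0 = (\<lambda>x. (\<Sum>i\<in>{1, 2, 3}. N i * cr_basis a1 a2 a3 i x,
                        \<Sum>i\<in>{1, 2, 3}. N (i + 3) * cr_basis a1 a2 a3 i x));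
            qJ0 = N 7;
            z = (\<lambda>x. if x \<in> Tp then - 1 else 0 :: real);
            w = (\<lambda>x. if x \<in> Tp then infdist x (affine hull G) else 0);
            qJ1 = (\<lambda>x. z x - mean T z);
            vJ2 = (\<lambda>x. (w x - pi_cr a1 a2 a3 w x) *\<^sub>R t);
            c1 = sigma_n (mum - mup) vJ0 0 n \<bullet> n;
            den = 1 + (mum / mup - 1) * (grad (pi_cr a1 a2 a3 w) \<bullet> n);
            c2 = (sigma_n (mum / mup - 1) vJ0 0 n \<bullet> t) / den
        in den \<noteq> 0 \<and>
           (\<forall>x\<in>Tp \<union> Tm. v x = vJ0 x + c2 *\<^sub>R vJ2 x \<and> q x = qJ0 + c1 * qJ1 x)))"
proof -
  obtain x y where "x \<in> Tp" "y \<in> Tm" using nonempty by blast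
  then have "\<exists>a\<in>{a1, a2, a3}. 0 < n \<bullet> (a - p)" "\<exists>a\<in>{a1, a2, a3}. 0 < (- n) \<bullet> (a - p)"
    using convex_hull_halfplane_vertex[of x "{a1, a2, a3}" n p]
      convex_hull_halfplane_vertex[of y "{a1, a2, a3}" "- n" p]
    unfolding Tp_def Tm_def T_def by auto
  then interpret cut_triangle a1 a2 a3 p p' n
    using tri endpoints(3) n_unit n_normal by unfold_locales auto
  define w where "w x = (if x \<in> Tp then infdist x (affine hull G) else 0)" for x
  have w: "w x = ramp x" if "x \<in> T" for x
    using that infdist_line[OF n_unit n_normal endpoints(3), of x] endpoints(3)
    by (auto simp: w_def Tp_def G_def ramp_def)
  then have pi_w: "pi_cr a1 a2 a3 w = pi_cr a1 a2 a3 ramp"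
    by (intro pi_cr_cong ballI eavg_cong_off_line) (simp_all add: T_def)
  show ?thesis (is "?uniqueness \<and> (\<forall>v q. ?ife v q \<longrightarrow> ?representation v q)")
  proof
    show ?uniqueness
      using IFE_unisolvent[OF T_def Tp_def Tm_def mu_pos] unfolding G_def by blast
    show "\<forall>v q. ?ife v q \<longrightarrow> ?representation v q"
    proof (intro allI impI)
      fix v q
      assume ife: "?ife v q"
      have N7: "Ndof a1 a2 a3 7 v q = mean T q" by (simp add: Ndof_def T_def)
      have "w x = ramp x" if "x \<in> Tp \<union> Tm" for x
        using that by (intro w) (auto simp: Tp_def Tm_def)
      then show "?representation v q"
        unfolding Let_def Ndof_cr_interpolant[OF tri] w_def[symmetric] pi_w N7
        using IFE_decomposition[OF T_def Tp_def Tm_def mu_pos ife[unfolded G_def]]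
          interface_denominator_pos[OF mu_pos] by simp
    qed
  qed
qed

end
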